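(* Let $q>0$ and $s>0$. For $n\in\mathbb{N}=\{1,2,3,\dots\}$ put \[ n_q:=\frac{\Gamma(nq+1)}{\Gamma((n-1)q+1)}, \] and put $0_q:=0$. Then the series \[ \sum_{n=0}^{\infty}e^{-s\,n_q} \] converges, i.e. $\sum_{n=0}^{\infty}e^{-s\,n_q}<\infty$.
   Context: $\Gamma$ denotes the Euler Gamma function, $\Gamma(z)=\int_0^\infty t^{z-1}e^{-t}\,dt$ for $\operatorname{Re} z>0$. The numbers $n_q$ are the eigenvalues of the operator $a^\dagger a$ on the Mittag-Leffler Fock space of the slitted plane. In that space the eigenvalue corresponding to $n=0$ is $0$. *)

theory Defs
  imports "HOL-Analysis.Analysis"
begin

definition nq :: "real \<Rightarrow> nat \<Rightarrow> real" where
  "nq q n = (if n = 0 then 0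
             else Gamma (real n * q + 1) / Gamma ((real n - 1) * q + 1))"

end

theory Submission
  imports Defs "HOL-Real_Asymp.Real_Asymp"
begin

text \<open>By the mean value theorem for \<open>ln \<Gamma>\<close>, the ratio \<open>\<Gamma>(x + a) / \<Gamma>(x)\<close> equals
  \<open>exp (a \<psi>(\<xi>))\<close> for some \<open>\<xi> > x\<close>. The digamma function \<open>\<psi>\<close> is increasing with
  \<open>\<psi>(m + 1) = H\<^sub>m - \<gamma> \<ge> ln (m + 1) - \<gamma>\<close>, so \<open>n\<^sub>q \<ge> C (n - 1)\<^sup>q\<close> with
  \<open>C = exp (-q\<gamma>) q\<^sup>q > 0\<close>. Thus \<open>exp (-s n\<^sub>q)\<close> decays faster than any power of \<open>n\<close>.\<close>

lemma Digamma_real_ge_ln: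
  fixes x :: real
  assumes "x > 1"
  shows "ln (x - 1) - euler_mascheroni \<le> Digamma x"
proof -
  define m where "m = nat \<lfloor>x - 1\<rfloor>"
  have m_lower: "x - 1 \<le> real m + 1" and m_upper: "real m + 1 \<le> x"
    using assms unfolding m_def by linarith+
  have "ln (x - 1) \<le> ln (real m + 1)"
    using assms m_lower by simp
  also have "\<dots> \<le> harm m"
    by (rule harm_ge_ln)
  also have "harm m - euler_mascheroni = Digamma (real (Suc m))"
    using Digamma_of_nat[of m] by (metis of_real_of_nat_eq of_real_eq_iff)
  also have "\<dots> \<le> Digamma x"
    using m_upper by (intro Digamma_real_mono) auto
  finally show ?thesis by simp
qed

lemma Gamma_ratio_ge_exp_Digamma:
  fixes x a :: real
  assumes "x > 0" and "a > 0"
  shows "exp (a * Digamma x) \<le> Gamma (x + a) / Gamma x"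
proof -
  have "\<exists>\<xi>. x < \<xi> \<and> \<xi> < x + a \<and> ln_Gamma (x + a) - ln_Gamma x = (x + a - x) * Digamma \<xi>"
    using assms by (intro MVT2 derivative_intros impI allI) (auto elim!: nonpos_Ints_cases)
  then obtain \<xi> where "x < \<xi>" and mvt: "ln_Gamma (x + a) - ln_Gamma x = a * Digamma \<xi>"
    by auto
  have "exp (a * Digamma x) \<le> exp (a * Digamma \<xi>)"
    using \<open>x < \<xi>\<close> assms by (simp add: Digamma_real_mono)
  also have "\<dots> = exp (ln_Gamma (x + a) - ln_Gamma x)"
    using mvt by simp
  also have "\<dots> = Gamma (x + a) / Gamma x"
    using assms by (simp add: Gamma_real_pos_exp exp_diff)
  finally show ?thesis .
qed

lemma Gamma_ratio_ge_powr:
  fixes x a :: real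
  assumes "x > 1" and "a > 0"
  shows "exp (- a * euler_mascheroni) * (x - 1) powr a \<le> Gamma (x + a) / Gamma x"
proof -
  have "exp (- a * euler_mascheroni) * (x - 1) powr a = exp (a * (ln (x - 1) - euler_mascheroni))"
    using assms by (simp add: powr_def exp_add [symmetric] algebra_simps)
  also have "\<dots> \<le> exp (a * Digamma x)"
    using Digamma_real_ge_ln[OF assms(1)] assms(2) by simp
  also have "\<dots> \<le> Gamma (x + a) / Gamma x"
    using assms by (intro Gamma_ratio_ge_exp_Digamma) auto
  finally show ?thesis .
qed

lemma nq_ge_powr:
  fixes q :: real
  assumes "q > 0" and "n \<ge> 2"
  shows "exp (- q * euler_mascheroni) * q powr q * real (n - 1) powr q \<le> nq q n"
proof -
  define x where "x = (real n - 1) * q + 1"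
  have "x > 1"
    using assms by (simp add: x_def)
  have "exp (- q * euler_mascheroni) * q powr q * real (n - 1) powr q
          = exp (- q * euler_mascheroni) * (x - 1) powr q"
    using assms by (simp add: x_def of_nat_diff powr_mult)
  also have "\<dots> \<le> Gamma (x + q) / Gamma x"
    using Gamma_ratio_ge_powr[OF \<open>x > 1\<close> assms(1)] .
  also have "\<dots> = nq q n"
    using assms by (simp add: nq_def x_def algebra_simps)
  finally show ?thesis .
qed

lemma summable_exp_neg_powr:
  fixes c q :: real
  assumes "c > 0" and "q > 0"
  shows "summable (\<lambda>n::nat. exp (- c * real n powr q))"
proof (rule summable_comparison_test_ev)
  have "eventually (\<lambda>n::nat. exp (- c * real n powr q) \<le> 1 / real n ^ 2) at_top"
    using assms by real_asymp
  then show "eventually (\<lambda>n::nat. norm (exp (- c * real n powr q)) \<le> 1 / real n ^ 2) at_top"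
    by simp
  show "summable (\<lambda>n::nat. 1 / real n ^ 2)"
    by (simp add: inverse_power_summable divide_inverse)
qed

theorem mainTheorem1:
  fixes q s :: real
  assumes "q > 0" and "s > 0"
  shows "summable (\<lambda>n::nat. exp (- s * nq q n))"
proof -
  define c where "c = s * exp (- q * euler_mascheroni) * q powr q"
  have "c > 0"
    using assms by (simp add: c_def)
  have "summable (\<lambda>n::nat. exp (- c * real (n - 1) powr q))"
    using summable_exp_neg_powr[OF \<open>c > 0\<close> assms(1)] by (subst summable_Suc_iff [symmetric]) simp
  moreover have "eventually (\<lambda>n. norm (exp (- s * nq q n)) \<le> exp (- c * real (n - 1) powr q)) at_top"
    using eventually_ge_at_top[of 2]
  proof eventually_elim
    case (elim n)
    have "c * real (n - 1) powr q \<le> s * nq q n"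
      using mult_left_mono[OF nq_ge_powr[OF assms(1) elim]] assms(2) by (simp add: c_def mult_ac)
    then show ?case by simp
  qed
  ultimately show ?thesis
    by (rule summable_comparison_test_ev[rotated])
qed

end
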